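(* Let $P$ be a finite graded poset with $\hat0$ and let $\lambda$ be an ER-labeling of $P$ satisfying the rank two switching property and the braid relation. Then for every interval $[x,y]$ of $P$, each connected component of the graph $G_{[x,y]}$ contains a unique sink, i.e., a unique ascent-free maximal chain of $[x,y]$.
   Context: An E-labeling of $P$ is a map $\lambda$ from the set of cover relations $x\lessdot y$ of $P$ to a poset $\Lambda$. The word of labels of a saturated chain $x_0\lessdot x_1\lessdot\cdots\lessdot x_\ell$ is $\lambda(x_0\lessdot x_1)\cdots\lambda(x_{\ell-1}\lessdot x_\ell)$; the chain is increasing if this word is strictly increasing in $\Lambda$, and ascent-free if there is no $i$ with $\lambda(x_{i-1}\lessdot x_i)<\lambda(x_i\lessdot x_{i+1})$. $\lambda$ is an ER-labeling if every closed interval has exactly one increasing maximal chain. $\lambda$ has the rank two switching property if for every saturated chain $\hat0=x_0\lessdot\cdots\lessdot x_k$ and every $i$ with $\lambda(x_{i-1}\lessdot x_i)<\lambda(x_i\lessdot x_{i+1})$ there is a unique element $x_i'$ with $x_{i-1}\lessdot x_i'\lessdot x_{i+1}$, $\lambda(x_{i-1}\lessdot x_i')=\lambda(x_i\lessdot x_{i+1})$ and $\lambda(x_i'\lessdot x_{i+1})=\lambda(x_{i-1}\lessdot x_i)$. For a maximal chain $\mathbf c$ of an interval $[x,y]$ with an ascent at rank position $i$, the quadratic exchange $U_i(\mathbf c)$ replaces $x_i$ by this $x_i'$; if there is no ascent at position $i$, $U_i(\mathbf c)=\mathbf c$. $G_{[x,y]}$ is the directed graph on the maximal chains of $[x,y]$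 with an edge $\mathbf c\to U_i(\mathbf c)$ whenever $U_i(\mathbf c)\neq\mathbf c$; a sink is a vertex of outdegree $0$. The braid relation holds if for every maximal chain $\mathbf c$ of any interval with $\lambda(x_{i-1}\lessdot x_i)<\lambda(x_i\lessdot x_{i+1})<\lambda(x_{i+1}\lessdot x_{i+2})$ we have $U_iU_{i+1}U_i(\mathbf c)=U_{i+1}U_iU_{i+1}(\mathbf c)$. *)

theory Defs
  imports Main
begin

text \<open>A poset is a finite carrier set P inside a type with a partial order.
  Chains are represented as lists of elements.\<close>

definition cov :: "'a::order set \<Rightarrow> 'a \<Rightarrow> 'a \<Rightarrow> bool" where
  "cov P x y \<longleftrightarrow> x \<in> P \<and> y \<in> P \<and> x < y \<and> \<not> (\<exists>z\<in>P. x < z \<and> z < y)"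

definition sat_chain :: "'a::order set \<Rightarrow> 'a list \<Rightarrow> bool" where
  "sat_chain P c \<longleftrightarrow> c \<noteq> [] \<and> (\<forall>i. Suc i < length c \<longrightarrow> cov P (c ! i) (c ! Suc i))"

definition maxchain :: "'a::order set \<Rightarrow> 'a \<Rightarrow> 'a \<Rightarrow> 'a list \<Rightarrow> bool" where
  "maxchain P x y c \<longleftrightarrow> sat_chain P c \<and> hd c = x \<and> last c = y"

definition graded_with_bot :: "'a::order set \<Rightarrow> 'a \<Rightarrow> bool" where
  "graded_with_bot P zero \<longleftrightarrow> finite P \<and> zero \<in> P \<and> (\<forall>x\<in>P. zero \<le> x) \<and>
     (\<exists>n. \<forall>c. sat_chain P c \<and> hd c = zero \<and> (\<forall>z\<in>P. \<not> last c < z) \<longrightarrow> length c = n)"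

text \<open>Word of labels of a chain; the labeling lam is only evaluated on covers.\<close>
definition label_word :: "('a \<Rightarrow> 'a \<Rightarrow> 'l) \<Rightarrow> 'a list \<Rightarrow> 'l list" where
  "label_word lam c = map (\<lambda>i. lam (c ! i) (c ! Suc i)) [0..<length c - 1]"

definition increasing_chain :: "('a \<Rightarrow> 'a \<Rightarrow> 'l::order) \<Rightarrow> 'a list \<Rightarrow> bool" where
  "increasing_chain lam c \<longleftrightarrow> sorted_wrt (<) (label_word lam c)"

definition ascent_free :: "('a \<Rightarrow> 'a \<Rightarrow> 'l::order) \<Rightarrow> 'a list \<Rightarrow> bool" where
  "ascent_free lam c \<longleftrightarrow>
     (\<forall>i. Suc i < length (label_word lam c) \<longrightarrow> \<not> (label_word lam c ! i < label_word lam c ! Suc i))"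

definition ascent_at :: "('a \<Rightarrow> 'a \<Rightarrow> 'l::order) \<Rightarrow> 'a list \<Rightarrow> nat \<Rightarrow> bool" where
  "ascent_at lam c i \<longleftrightarrow> 1 \<le> i \<and> Suc i < length c \<and>
     lam (c ! (i - 1)) (c ! i) < lam (c ! i) (c ! Suc i)"

definition ER_labeling :: "'a::order set \<Rightarrow> ('a \<Rightarrow> 'a \<Rightarrow> 'l::order) \<Rightarrow> bool" where
  "ER_labeling P lam \<longleftrightarrow>
     (\<forall>x\<in>P. \<forall>y\<in>P. x \<le> y \<longrightarrow> (\<exists>!c. maxchain P x y c \<and> increasing_chain lam c))"

definition switch_elem :: "'a::order set \<Rightarrow> ('a \<Rightarrow> 'a \<Rightarrow> 'l) \<Rightarrow> 'a \<Rightarrow> 'a \<Rightarrow> 'a \<Rightarrow> 'a \<Rightarrow> bool" where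
  "switch_elem P lam a b d x' \<longleftrightarrow> cov P a x' \<and> cov P x' d \<and>
     lam a x' = lam b d \<and> lam x' d = lam a b"

definition rank_two_switching :: "'a::order set \<Rightarrow> 'a \<Rightarrow> ('a \<Rightarrow> 'a \<Rightarrow> 'l::order) \<Rightarrow> bool" where
  "rank_two_switching P zero lam \<longleftrightarrow>
     (\<forall>c i. sat_chain P c \<and> hd c = zero \<and> ascent_at lam c i \<longrightarrow>
        (\<exists>!x'. switch_elem P lam (c ! (i - 1)) (c ! i) (c ! Suc i) x'))"

definition U :: "'a::order set \<Rightarrow> ('a \<Rightarrow> 'a \<Rightarrow> 'l::order) \<Rightarrow> nat \<Rightarrow> 'a list \<Rightarrow> 'a list" where
  "U P lam i c = (if ascent_at lam c i
      then c[i := (THE x'. switch_elem P lam (c ! (i - 1)) (c ! i) (c ! Suc i) x')]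
      else c)"

definition G_edge :: "'a::order set \<Rightarrow> ('a \<Rightarrow> 'a \<Rightarrow> 'l::order) \<Rightarrow> 'a \<Rightarrow> 'a \<Rightarrow> 'a list \<Rightarrow> 'a list \<Rightarrow> bool" where
  "G_edge P lam x y c d \<longleftrightarrow> maxchain P x y c \<and> maxchain P x y d \<and>
     (\<exists>i. U P lam i c = d \<and> d \<noteq> c)"

definition is_sink :: "'a::order set \<Rightarrow> ('a \<Rightarrow> 'a \<Rightarrow> 'l::order) \<Rightarrow> 'a \<Rightarrow> 'a \<Rightarrow> 'a list \<Rightarrow> bool" where
  "is_sink P lam x y c \<longleftrightarrow> maxchain P x y c \<and> \<not> (\<exists>d. G_edge P lam x y c d)"

definition G_connected :: "'a::order set \<Rightarrow> ('a \<Rightarrow> 'a \<Rightarrow> 'l::order) \<Rightarrow> 'a \<Rightarrow> 'a \<Rightarrow> 'a list \<Rightarrow> 'a list \<Rightarrow> bool" where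
  "G_connected P lam x y = (\<lambda>c d. G_edge P lam x y c d \<or> G_edge P lam x y d c)\<^sup>*\<^sup>*"

definition braid_relation :: "'a::order set \<Rightarrow> ('a \<Rightarrow> 'a \<Rightarrow> 'l::order) \<Rightarrow> bool" where
  "braid_relation P lam \<longleftrightarrow>
     (\<forall>x y c i. x \<in> P \<and> y \<in> P \<and> x \<le> y \<and> maxchain P x y c \<and>
        ascent_at lam c i \<and> ascent_at lam c (Suc i) \<longrightarrow>
        U P lam i (U P lam (Suc i) (U P lam i c)) =
        U P lam (Suc i) (U P lam i (U P lam (Suc i) c)))"

end

theory Submission
  imports Defs "HOL-Library.Confluence"
begin

text \<open>
  The edges of \<open>G\<^bsub>[x,y]\<^esub>\<close> form an abstract rewriting system on the maximal chains
  of \<open>[x,y]\<close>. An exchange \<open>U\<^sub>i\<close> turns an ascent of the label word into a descent,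
  so the label word grows lexicographically and the system terminates. It is locally confluent:
  exchanges at non-adjacent positions commute, and two exchanges at adjacent ascents
  \<open>a < b < c\<close> are joined by the two sides of the braid relation. By Newman's lemma the
  system is confluent, hence every component contains exactly one normal form, and the normal
  forms are precisely the chains without ascents. The ER property is only needed to extend a
  chain of \<open>[x,y]\<close> down to the bottom element, where rank two switching is postulated.
\<close>

section \<open>Abstract rewriting\<close>

lemma newman_confluentp:
  assumes terminating: "wfp R\<inverse>\<inverse>"
    and local_conf: "\<And>a b c. R a b \<Longrightarrow> R a c \<Longrightarrow> \<exists>d. R\<^sup>*\<^sup>* b d \<and> R\<^sup>*\<^sup>* c d"
  shows "confluentp R"
proof (rule confluentpI)
  show "\<exists>d. R\<^sup>*\<^sup>* b d \<and> R\<^sup>*\<^sup>* c d" if "R\<^sup>*\<^sup>* a b" "R\<^sup>*\<^sup>* a c" for a b c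
    using terminating that
  proof (induction a arbitrary: b c rule: wfp_induct_rule)
    case (less a)
    show ?case
    proof (cases "a = b \<or> a = c")
      case True
      then show ?thesis using less.prems by blast
    next
      case False
      then obtain b' c' where b': "R a b'" "R\<^sup>*\<^sup>* b' b" and c': "R a c'" "R\<^sup>*\<^sup>* c' c"
        using less.prems by (metis converse_rtranclpE)
      obtain d where d: "R\<^sup>*\<^sup>* b' d" "R\<^sup>*\<^sup>* c' d"
        using local_conf[OF b'(1) c'(1)] by blast
      obtain e where e: "R\<^sup>*\<^sup>* b e" "R\<^sup>*\<^sup>* d e"
        using less.IH[of b' b d] b' d by blast
      have "R\<^sup>*\<^sup>* c' e" using d(2) e(2) by (rule rtranclp_trans)
      then obtain f where "R\<^sup>*\<^sup>* e f" "R\<^sup>*\<^sup>* c f"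
        using less.IH[of c' e c] c' by blast
      then show ?thesis using e(1) by (meson rtranclp_trans)
    qed
  qed
qed

lemma ex_normal_form:
  assumes "wfp R\<inverse>\<inverse>"
  shows "\<exists>s. R\<^sup>*\<^sup>* a s \<and> \<not> (\<exists>d. R s d)"
  using assms
proof (induction a rule: wfp_induct_rule)
  case (less a)
  then show ?case by (metis conversepI converse_rtranclp_into_rtranclp rtranclp.rtrancl_refl)
qed

lemma ex1_normal_form_equivclp:
  assumes "wfp R\<inverse>\<inverse>" and "confluentp R"
  shows "\<exists>!s. equivclp R a s \<and> \<not> (\<exists>d. R s d)"
proof (rule ex_ex1I)
  show "\<exists>s. equivclp R a s \<and> \<not> (\<exists>d. R s d)"
    using ex_normal_form[OF assms(1)] rtranclp_into_equivclp by metis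
next
  have joinable: "\<exists>u. R\<^sup>*\<^sup>* s u \<and> R\<^sup>*\<^sup>* t u" if "equivclp R s t" for s t
    using that semiconfluentp_equivclp[of R] assms(2)
    by (auto simp: confluentp_eq_semiconfluentp rtranclp_conversep)
  have normal_eq: "s = u" if "R\<^sup>*\<^sup>* s u" "\<not> (\<exists>d. R s d)" for s u
    using that by (cases rule: converse_rtranclpE) auto
  fix s t assume "equivclp R a s \<and> \<not> (\<exists>d. R s d)" "equivclp R a t \<and> \<not> (\<exists>d. R t d)"
  then have "equivclp R s t" "\<not> (\<exists>d. R s d)" "\<not> (\<exists>d. R t d)"
    by (meson equivclp_sym equivclp_trans)+
  then show "s = t" using joinable normal_eq by metis
qed

section \<open>Saturated chains and their label words\<close>

lemma length_label_word [simp]: "length (label_word lam c) = length c - 1"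
  by (simp add: label_word_def)

lemma nth_label_word [simp]: "k < length c - 1 \<Longrightarrow> label_word lam c ! k = lam (c ! k) (c ! Suc k)"
  by (simp add: label_word_def)

lemma ascent_at_label_word:
  "ascent_at lam c i \<longleftrightarrow>
     1 \<le> i \<and> Suc i < length c \<and> label_word lam c ! (i - 1) < label_word lam c ! i"
  by (auto simp: ascent_at_def)

lemma ascent_free_iff_no_ascent_at: "ascent_free lam c \<longleftrightarrow> (\<forall>i. \<not> ascent_at lam c i)"
proof
  assume "ascent_free lam c"
  show "\<forall>i. \<not> ascent_at lam c i"
  proof (intro allI notI)
    fix i assume "ascent_at lam c i"
    then have "Suc (i - 1) = i" "Suc (i - 1) < length (label_word lam c)"
      "label_word lam c ! (i - 1) < label_word lam c ! Suc (i - 1)"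
      by (auto simp: ascent_at_label_word)
    then show False using \<open>ascent_free lam c\<close> unfolding ascent_free_def by metis
  qed
next
  assume no_ascent: "\<forall>i. \<not> ascent_at lam c i"
  show "ascent_free lam c"
    unfolding ascent_free_def
  proof (intro allI impI notI)
    fix j assume "Suc j < length (label_word lam c)"
      "label_word lam c ! j < label_word lam c ! Suc j"
    then have "ascent_at lam c (Suc j)" by (simp add: ascent_at_label_word)
    then show False using no_ascent by blast
  qed
qed

lemma lexord_swap_adjacent:
  assumes "0 < i" and "i < length w" and "(w ! (i - 1), w ! i) \<in> r"
  shows "(w, w[i - 1 := w ! i, i := w ! (i - 1)]) \<in> lexord r"
  unfolding lexord_take_index_conv
  by (rule disjI2, rule exI[of _ "i - 1"]) (use assms in simp)

lemma sat_chain_cov: "sat_chain P c \<Longrightarrow> Suc i < length c \<Longrightarrow> cov P (c ! i) (c ! Suc i)"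
  by (simp add: sat_chain_def)

lemma sat_chain_distinct: "sat_chain P c \<Longrightarrow> distinct c"
proof -
  assume "sat_chain P c"
  then have "sorted_wrt (<) c"
    by (subst sorted_wrt_iff_nth_Suc_transp) (auto simp: sat_chain_def cov_def transp_def)
  then show "distinct c"
    by (metis distinct_conv_nth linorder_neq_iff order_less_irrefl sorted_wrt_nth_less)
qed

lemma sat_chain_subset:
  assumes "sat_chain P c" and "hd c \<in> P"
  shows "set c \<subseteq> P"
proof
  fix z assume "z \<in> set c"
  then obtain k where k: "k < length c" "z = c ! k" by (auto simp: in_set_conv_nth)
  show "z \<in> P"
  proof (cases k)
    case 0
    then show ?thesis using k assms by (simp add: hd_conv_nth sat_chain_def)
  next
    case (Suc j)
    then show ?thesis using k sat_chain_cov[OF assms(1), of j] by (simp add: cov_def)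
  qed
qed

lemma finite_maxchains:
  assumes "finite P" and "x \<in> P"
  shows "finite {c. maxchain P x y c}"
proof (rule finite_subset)
  show "{c. maxchain P x y c} \<subseteq> {c. set c \<subseteq> P \<and> distinct c}"
    using assms(2) sat_chain_subset sat_chain_distinct by (auto simp: maxchain_def)
  show "finite {c. set c \<subseteq> P \<and> distinct c}"
    using assms(1) by (rule finite_subset_distinct)
qed

lemma sat_chain_snoc:
  assumes "sat_chain P c" and "cov P (last c) z"
  shows "sat_chain P (c @ [z])"
  unfolding sat_chain_def
proof (intro conjI allI impI)
  fix k assume k: "Suc k < length (c @ [z])"
  have "c \<noteq> []" using assms(1) by (simp add: sat_chain_def)
  show "cov P ((c @ [z]) ! k) ((c @ [z]) ! Suc k)"
  proof (cases "Suc k < length c")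
    case True
    then show ?thesis using sat_chain_cov[OF assms(1) True] by (simp add: nth_append)
  next
    case False
    then have "k = length c - 1" using k by simp
    then show ?thesis using assms(2) \<open>c \<noteq> []\<close> by (simp add: nth_append last_conv_nth)
  qed
qed simp

lemma sat_chain_update:
  assumes "sat_chain P c" and "0 < i" and "Suc i < length c"
    and "cov P (c ! (i - 1)) z" and "cov P z (c ! Suc i)"
  shows "sat_chain P (c[i := z])"
  unfolding sat_chain_def
proof (intro conjI allI impI)
  fix k assume k: "Suc k < length (c[i := z])"
  consider "k = i - 1" | "k = i" | "k \<noteq> i" "Suc k \<noteq> i" by linarith
  then show "cov P (c[i := z] ! k) (c[i := z] ! Suc k)"
    by cases (use assms k sat_chain_cov[OF assms(1), of k] in auto)
qed (use assms in \<open>auto simp: sat_chain_def\<close>)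

lemma label_word_update:
  assumes "0 < i" and "Suc i < length c"
  shows "label_word lam (c[i := z]) =
           (label_word lam c)[i - 1 := lam (c ! (i - 1)) z, i := lam z (c ! Suc i)]"
proof (rule nth_equalityI)
  fix k assume "k < length (label_word lam (c[i := z]))"
  then have k: "k < length c - 1" by simp
  consider "k = i - 1" | "k = i" | "k \<noteq> i" "Suc k \<noteq> i" by linarith
  then show "label_word lam (c[i := z]) ! k =
      (label_word lam c)[i - 1 := lam (c ! (i - 1)) z, i := lam z (c ! Suc i)] ! k"
    by cases (use assms k in auto)
qed simp

section \<open>Quadratic exchanges and the graph of maximal chains\<close>

lemma U_no_ascent: "\<not> ascent_at lam c i \<Longrightarrow> U P lam i c = c"
  by (simp add: U_def)

lemma U_commute_far:
  assumes ai: "ascent_at lam c i" and aj: "ascent_at lam c j" and far: "Suc i < j"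
  shows "ascent_at lam (U P lam i c) j" and "ascent_at lam (U P lam j c) i"
    and "U P lam j (U P lam i c) = U P lam i (U P lam j c)"
proof -
  define zi where "zi = (THE z. switch_elem P lam (c ! (i - 1)) (c ! i) (c ! Suc i) z)"
  define zj where "zj = (THE z. switch_elem P lam (c ! (j - 1)) (c ! j) (c ! Suc j) z)"
  have Ui: "U P lam i c = c[i := zi]" using ai by (simp add: U_def zi_def)
  have Uj: "U P lam j c = c[j := zj]" using aj by (simp add: U_def zj_def)
  have distinct_pos: "j - 1 \<noteq> i" "j \<noteq> i" "Suc j \<noteq> i" "i - 1 \<noteq> j" "Suc i \<noteq> j" using far by auto
  have aij: "ascent_at lam (c[i := zi]) j" and aji: "ascent_at lam (c[j := zj]) i"
    using ai aj distinct_pos by (simp_all add: ascent_at_def)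
  then show "ascent_at lam (U P lam i c) j" and "ascent_at lam (U P lam j c) i"
    by (simp_all add: Ui Uj)
  have "U P lam j (c[i := zi]) = c[i := zi, j := zj]"
    using aij distinct_pos by (simp add: U_def zj_def)
  moreover have "U P lam i (c[j := zj]) = c[j := zj, i := zi]"
    using aji distinct_pos by (simp add: U_def zi_def)
  ultimately show "U P lam j (U P lam i c) = U P lam i (U P lam j c)"
    using distinct_pos by (simp add: Ui Uj list_update_swap)
qed

lemma maxchain_equivclp_G_edge:
  assumes "equivclp (G_edge P lam x y) c s" and "maxchain P x y c"
  shows "maxchain P x y s"
  using assms by (induction rule: equivclp_induct) (auto simp: G_edge_def elim: symclpE)

lemma G_connected_eq_equivclp: "G_connected P lam x y = equivclp (G_edge P lam x y)"
  by (simp add: G_connected_def equivclp_def symclp_def[abs_def])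

locale switching_labeling =
  fixes P :: "'a::order set" and zero :: 'a and lam :: "'a \<Rightarrow> 'a \<Rightarrow> 'l::order"
  assumes zero_in: "zero \<in> P"
    and zero_least: "\<And>z. z \<in> P \<Longrightarrow> zero \<le> z"
    and ER: "ER_labeling P lam"
    and switching: "rank_two_switching P zero lam"
begin

lemma ex1_switch_elem:
  assumes c: "sat_chain P c" and asc: "ascent_at lam c i"
  shows "\<exists>!z. switch_elem P lam (c ! (i - 1)) (c ! i) (c ! Suc i) z"
proof -
  have i: "1 \<le> i" "Suc i < length c" using asc by (auto simp: ascent_at_def)
  have cov1: "cov P (c ! (i - 1)) (c ! i)" and cov2: "cov P (c ! i) (c ! Suc i)"
    using sat_chain_cov[OF c, of "i - 1"] sat_chain_cov[OF c, of i] i by simp_all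
  then have "c ! (i - 1) \<in> P" by (simp add: cov_def)
  then obtain q where q: "maxchain P zero (c ! (i - 1)) q"
    using ER zero_in zero_least unfolding ER_labeling_def by blast
  \<comment> \<open>Switching is only postulated for chains from the bottom, so prolong the chain downwards.\<close>
  define e where "e = q @ [c ! i, c ! Suc i]"
  have q_ne: "q \<noteq> []" using q by (simp add: maxchain_def sat_chain_def)
  have e_nth: "e ! (length q - 1) = c ! (i - 1)" "e ! length q = c ! i" "e ! Suc (length q) = c ! Suc i"
    using q q_ne by (auto simp: e_def nth_append maxchain_def last_conv_nth)
  have "sat_chain P ((q @ [c ! i]) @ [c ! Suc i])"
    using q cov1 cov2 by (intro sat_chain_snoc) (auto simp: maxchain_def)
  then have "sat_chain P e" by (simp add: e_def)
  moreover have "hd e = zero" using q q_ne by (simp add: e_def maxchain_def)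
  moreover have "ascent_at lam e (length q)"
    using asc q_ne e_nth by (auto simp: ascent_at_def e_def Suc_le_eq)
  ultimately have "\<exists>!z. switch_elem P lam (e ! (length q - 1)) (e ! length q) (e ! Suc (length q)) z"
    using switching unfolding rank_two_switching_def by blast
  then show ?thesis by (simp only: e_nth)
qed

lemma U_ascent:
  assumes "sat_chain P c" and "ascent_at lam c i"
  obtains z where "U P lam i c = c[i := z]" and "switch_elem P lam (c ! (i - 1)) (c ! i) (c ! Suc i) z"
  using theI'[OF ex1_switch_elem[OF assms]] assms(2) that by (simp add: U_def)

lemma U_ascent_props:
  assumes c: "maxchain P x y c" and asc: "ascent_at lam c i"
  shows "maxchain P x y (U P lam i c)" and "U P lam i c \<noteq> c" and "length (U P lam i c) = length c"
    and "label_word lam (U P lam i c) =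
           (label_word lam c)[i - 1 := label_word lam c ! i, i := label_word lam c ! (i - 1)]"
proof -
  have sat: "sat_chain P c" using c by (simp add: maxchain_def)
  obtain z where U: "U P lam i c = c[i := z]" and sw: "switch_elem P lam (c ! (i - 1)) (c ! i) (c ! Suc i) z"
    using U_ascent[OF sat asc] .
  have i: "0 < i" "Suc i < length c" and lt: "lam (c ! (i - 1)) (c ! i) < lam (c ! i) (c ! Suc i)"
    using asc by (auto simp: ascent_at_def)
  have sw_cov: "cov P (c ! (i - 1)) z" "cov P z (c ! Suc i)"
    and sw_lam: "lam (c ! (i - 1)) z = lam (c ! i) (c ! Suc i)" "lam z (c ! Suc i) = lam (c ! (i - 1)) (c ! i)"
    using sw by (simp_all add: switch_elem_def)
  have "sat_chain P (c[i := z])" using sat_chain_update[OF sat i sw_cov] .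
  moreover have "hd (c[i := z]) = hd c"
    using i by (cases c; cases i) auto
  moreover have "last (c[i := z]) = last c"
    using i by (subst last_list_update) auto
  ultimately show "maxchain P x y (U P lam i c)" using c U by (simp add: maxchain_def)
  have "z \<noteq> c ! i"
  proof
    assume "z = c ! i"
    then have "lam (c ! (i - 1)) (c ! i) = lam (c ! i) (c ! Suc i)" using sw_lam(1) by simp
    then show False using lt by simp
  qed
  then have "U P lam i c ! i \<noteq> c ! i" using U i by simp
  then show "U P lam i c \<noteq> c" by auto
  show "length (U P lam i c) = length c" using U by simp
  have "label_word lam c ! (i - 1) = lam (c ! (i - 1)) (c ! i)" "label_word lam c ! i = lam (c ! i) (c ! Suc i)"
    using i by simp_all
  then show "label_word lam (U P lam i c) =
           (label_word lam c)[i - 1 := label_word lam c ! i, i := label_word lam c ! (i - 1)]"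
    unfolding U label_word_update[OF i] sw_lam by simp
qed

lemma G_edge_iff:
  "G_edge P lam x y c d \<longleftrightarrow> maxchain P x y c \<and> (\<exists>i. ascent_at lam c i \<and> d = U P lam i c)"
proof
  assume "G_edge P lam x y c d"
  then obtain i where "maxchain P x y c" "d = U P lam i c" "d \<noteq> c"
    by (auto simp: G_edge_def)
  then show "maxchain P x y c \<and> (\<exists>i. ascent_at lam c i \<and> d = U P lam i c)"
    using U_no_ascent by metis
next
  assume "maxchain P x y c \<and> (\<exists>i. ascent_at lam c i \<and> d = U P lam i c)"
  then show "G_edge P lam x y c d"
    using U_ascent_props(1,2) by (auto simp: G_edge_def)
qed

lemma G_edge_U:
  "maxchain P x y c \<Longrightarrow> ascent_at lam c i \<Longrightarrow> G_edge P lam x y c (U P lam i c)"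
  by (auto simp: G_edge_iff)

lemma is_sink_iff_ascent_free:
  assumes "maxchain P x y s"
  shows "is_sink P lam x y s \<longleftrightarrow> ascent_free lam s"
  using assms by (auto simp: is_sink_def G_edge_iff ascent_free_iff_no_ascent_at)

lemma G_edge_lexord:
  assumes "G_edge P lam x y c d"
  shows "(label_word lam c, label_word lam d) \<in> lexord {(a, b). a < b}"
proof -
  obtain i where c: "maxchain P x y c" and asc: "ascent_at lam c i" and d: "d = U P lam i c"
    using assms G_edge_iff by blast
  have "(label_word lam c, (label_word lam c)[i - 1 := label_word lam c ! i, i := label_word lam c ! (i - 1)])
      \<in> lexord {(a, b). a < b}"
    by (rule lexord_swap_adjacent) (use asc in \<open>auto simp: ascent_at_label_word\<close>)
  then show ?thesis using U_ascent_props(4)[OF c asc] d by simp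
qed

lemma wfp_converse_G_edge:
  assumes "finite P" and "x \<in> P"
  shows "wfp (G_edge P lam x y)\<inverse>\<inverse>"
  unfolding wfp_def conversep_iff
proof (rule finite_acyclic_wf)
  let ?S = "{(d, c). G_edge P lam x y c d}"
  have "?S \<subseteq> {c. maxchain P x y c} \<times> {c. maxchain P x y c}"
    by (auto simp: G_edge_def)
  then show "finite ?S"
    using finite_maxchains[OF assms] by (meson finite_SigmaI finite_subset)
  have trans_less: "trans {(a::'l, b). a < b}" by (auto simp: trans_def)
  have "(label_word lam c, label_word lam d) \<in> lexord {(a, b). a < b}" if "(d, c) \<in> ?S\<^sup>+" for c d
    using that
  proof (induction rule: trancl_induct)
    case (base c)
    then show ?case using G_edge_lexord by simp
  next
    case (step c e)
    then have "(label_word lam e, label_word lam c) \<in> lexord {(a, b). a < b}"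
      using G_edge_lexord by simp
    then show ?case using step.IH lexord_trans[OF _ _ trans_less] by blast
  qed
  then show "acyclic ?S"
    unfolding acyclic_def using lexord_irreflexive[of "{(a::'l, b). a < b}"] by auto
qed

lemma U_braid_joinable:
  assumes c: "maxchain P x y c" and asc: "ascent_at lam c i" "ascent_at lam c (Suc i)"
    and braid: "braid_relation P lam" and xy: "x \<in> P" "y \<in> P" "x \<le> y"
  shows "\<exists>e. (G_edge P lam x y)\<^sup>*\<^sup>* (U P lam i c) e \<and> (G_edge P lam x y)\<^sup>*\<^sup>* (U P lam (Suc i) c) e"
proof -
  let ?R = "G_edge P lam x y"
  define w where "w = label_word lam c"
  have i: "0 < i" "Suc (Suc i) < length c" and len: "length w = length c - 1"
    using asc by (auto simp: ascent_at_def w_def)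
  have ab: "w ! (i - 1) < w ! i" and bc: "w ! i < w ! Suc i"
    using asc by (auto simp: ascent_at_label_word w_def)
  then have ac: "w ! (i - 1) < w ! Suc i" by (rule less_trans)
  have pos: "i - 1 \<noteq> i" "i - 1 \<noteq> Suc i" "Suc i - 1 = i" using i by auto
  \<comment> \<open>Labels \<open>a < b < c\<close> at positions \<open>i - 1, i, i + 1\<close> become \<open>bac, bca\<close> along one
    side and \<open>acb, cab\<close> along the other, so every step is again an exchange at an ascent.\<close>
  define c1 where "c1 = U P lam i c"
  have c1: "maxchain P x y c1" "length c1 = length c" "label_word lam c1 = w[i - 1 := w ! i, i := w ! (i - 1)]"
    using U_ascent_props[OF c asc(1)] by (simp_all add: c1_def w_def)
  have asc1: "ascent_at lam c1 (Suc i)" using c1 i pos ac len by (simp add: ascent_at_label_word)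
  define c2 where "c2 = U P lam (Suc i) c1"
  have c2: "maxchain P x y c2" "length c2 = length c"
    "label_word lam c2 = (label_word lam c1)[i := label_word lam c1 ! Suc i, Suc i := label_word lam c1 ! i]"
    using U_ascent_props[OF c1(1) asc1] c1(2) by (simp_all add: c2_def)
  have asc2: "ascent_at lam c2 i" using c2 c1 i pos bc len by (simp add: ascent_at_label_word)
  define d1 where "d1 = U P lam (Suc i) c"
  have d1: "maxchain P x y d1" "length d1 = length c" "label_word lam d1 = w[i := w ! Suc i, Suc i := w ! i]"
    using U_ascent_props[OF c asc(2)] pos by (simp_all add: d1_def w_def)
  have bsc1: "ascent_at lam d1 i" using d1 i pos ac len by (simp add: ascent_at_label_word)
  define d2 where "d2 = U P lam i d1"
  have d2: "maxchain P x y d2" "length d2 = length c"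
    "label_word lam d2 = (label_word lam d1)[i - 1 := label_word lam d1 ! i, i := label_word lam d1 ! (i - 1)]"
    using U_ascent_props[OF d1(1) bsc1] d1(2) by (simp_all add: d2_def)
  have bsc2: "ascent_at lam d2 (Suc i)" using d2 d1 i pos ab len by (simp add: ascent_at_label_word)
  have "U P lam i c2 = U P lam (Suc i) d2"
    using braid xy c asc unfolding braid_relation_def c2_def c1_def d2_def d1_def by blast
  moreover have "?R\<^sup>*\<^sup>* c1 (U P lam i c2)"
    using G_edge_U[OF c1(1) asc1] G_edge_U[OF c2(1) asc2] by (simp add: c2_def)
  moreover have "?R\<^sup>*\<^sup>* d1 (U P lam (Suc i) d2)"
    using G_edge_U[OF d1(1) bsc1] G_edge_U[OF d2(1) bsc2] by (simp add: d2_def)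
  ultimately show ?thesis unfolding c1_def d1_def by metis
qed

lemma G_edge_locally_confluent:
  assumes braid: "braid_relation P lam" and xy: "x \<in> P" "y \<in> P" "x \<le> y"
    and "G_edge P lam x y c d1" and "G_edge P lam x y c d2"
  shows "\<exists>e. (G_edge P lam x y)\<^sup>*\<^sup>* d1 e \<and> (G_edge P lam x y)\<^sup>*\<^sup>* d2 e"
proof -
  let ?R = "G_edge P lam x y"
  obtain i j where c: "maxchain P x y c" and asc: "ascent_at lam c i" "ascent_at lam c j"
    and d: "d1 = U P lam i c" "d2 = U P lam j c"
    using assms(5,6) G_edge_iff by metis
  have far: "\<exists>e. ?R\<^sup>*\<^sup>* (U P lam k c) e \<and> ?R\<^sup>*\<^sup>* (U P lam l c) e"
    if "ascent_at lam c k" "ascent_at lam c l" "Suc k < l" for k l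
  proof -
    note commute = U_commute_far[where P = P, OF that]
    have "?R (U P lam k c) (U P lam l (U P lam k c))"
      using G_edge_U[OF U_ascent_props(1)[OF c that(1)] commute(1)] .
    moreover have "?R (U P lam l c) (U P lam k (U P lam l c))"
      using G_edge_U[OF U_ascent_props(1)[OF c that(2)] commute(2)] .
    ultimately show ?thesis using commute(3) by (metis r_into_rtranclp)
  qed
  consider "i = j" | "Suc i = j" | "Suc j = i" | "Suc i < j" | "Suc j < i" by linarith
  then show ?thesis
  proof cases
    case 1
    then show ?thesis using d by blast
  next
    case 2
    then show ?thesis using U_braid_joinable[OF c asc(1) _ braid xy] asc(2) d by blast
  next
    case 3
    then show ?thesis using U_braid_joinable[OF c asc(2) _ braid xy] asc(1) d by blast
  next
    case 4
    then show ?thesis using far asc d by blast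
  next
    case 5
    then show ?thesis using far asc d by blast
  qed
qed

end

theorem corollary3p13:
  fixes P :: "'a::order set" and zero :: 'a and lam :: "'a \<Rightarrow> 'a \<Rightarrow> 'l::order"
  assumes "graded_with_bot P zero"
    and "ER_labeling P lam"
    and "rank_two_switching P zero lam"
    and "braid_relation P lam"
    and "x \<in> P" and "y \<in> P" and "x \<le> y"
  shows "(\<forall>c. maxchain P x y c \<longrightarrow>
            (\<exists>!s. G_connected P lam x y c s \<and> is_sink P lam x y s))
         \<and> (\<forall>s. maxchain P x y s \<longrightarrow> (is_sink P lam x y s \<longleftrightarrow> ascent_free lam s))"
proof -
  interpret switching_labeling P zero lam
    using assms(1-3) by unfold_locales (auto simp: graded_with_bot_def)
  let ?R = "G_edge P lam x y"
  have terminating: "wfp ?R\<inverse>\<inverse>"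
    using assms(1,5) by (intro wfp_converse_G_edge) (auto simp: graded_with_bot_def)
  have "confluentp ?R"
    using newman_confluentp[OF terminating] G_edge_locally_confluent[OF assms(4-7)] by blast
  then have normal_form: "\<exists>!s. equivclp ?R c s \<and> \<not> (\<exists>d. ?R s d)" for c
    using ex1_normal_form_equivclp[OF terminating] by blast
  have "G_connected P lam x y c s \<and> is_sink P lam x y s \<longleftrightarrow> equivclp ?R c s \<and> \<not> (\<exists>d. ?R s d)"
    if "maxchain P x y c" for c s
    using maxchain_equivclp_G_edge[OF _ that] by (auto simp: G_connected_eq_equivclp is_sink_def)
  then show ?thesis using normal_form is_sink_iff_ascent_free by simp
qed

end
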